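(* For every $n\ge 1$, every labeled and every unlabeled tabletop rearrangement instance with $n$ objects has $\mathrm{MRB}\le n-1$; and for every $n\ge1$ there exists an instance whose $n$ objects are congruent convex objects (thin rectangles) such that its unlabeled $\mathrm{MRB}$, as well as its labeled $\mathrm{MRB}$ under any assignment of labels, equals $n-1$.
   Context: A tabletop rearrangement instance consists of $n$ objects (generalized cylinders of equal height; only planar footprints matter) in a bounded planar workspace, a feasible start arrangement and a feasible goal arrangement of poses in $SE(2)$; an arrangement is feasible if no two placed footprints overlap (have intersecting interiors). In the labeled setting each object $o_i$ must end at its own goal pose $x_i^g$; in the unlabeled setting objects are congruent and interchangeable and must end occupying all goal poses. A plan with external buffers is a sequence of pick-and-place operations in which each object is picked from its start pose exactly once and either placed directly at a goal pose (its own goal in the labeled setting, any unoccupied goal pose in the unlabeled setting), or placed into an external buffer (outside the workspace, unlimited capacity) and later moved from the buffer to such a goal pose; an object may be placed at a goal pose only if it does not overlap any object currently in the workspace; at the end every object is at a goal pose as required. The number of running buffers at a moment is the number of objects stored in buffers; $\mathrm{MRB}$ is the minimum over plans of the maximum number of running buffers during the plan. *)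

theory Defs
  imports "HOL-Analysis.Analysis"
begin

(* The plane is modelled as the complex numbers.  A pose in SE(2) is a pair
   (theta, t): rotation by angle theta followed by translation by t. *)
type_synonym pose = "real \<times> complex"

definition rigid :: "pose \<Rightarrow> complex \<Rightarrow> complex" where
  "rigid p z = cis (fst p) * z + snd p"

definition place :: "pose \<Rightarrow> complex set \<Rightarrow> complex set" where
  "place p S = rigid p ` S"

definition feasible_arr :: "nat \<Rightarrow> complex set \<Rightarrow> (nat \<Rightarrow> complex set) \<Rightarrow> bool" where
  "feasible_arr n W A \<longleftrightarrow>
     (\<forall>i<n. A i \<subseteq> W) \<and>
     (\<forall>i<n. \<forall>j<n. i \<noteq> j \<longrightarrow> interior (A i) \<inter> interior (A j) = {})"

definition labeled_instance ::
  "nat \<Rightarrow> complex set \<Rightarrow> (nat \<Rightarrow> complex set) \<Rightarrow> (nat \<Rightarrow> pose) \<Rightarrow> (nat \<Rightarrow> pose) \<Rightarrow> bool" where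
  "labeled_instance n W F ps pg \<longleftrightarrow>
     bounded W \<and> (\<forall>i<n. compact (F i) \<and> F i \<noteq> {}) \<and>
     feasible_arr n W (\<lambda>i. place (ps i) (F i)) \<and>
     feasible_arr n W (\<lambda>i. place (pg i) (F i))"

definition unlabeled_instance ::
  "nat \<Rightarrow> complex set \<Rightarrow> complex set \<Rightarrow> (nat \<Rightarrow> pose) \<Rightarrow> (nat \<Rightarrow> pose) \<Rightarrow> bool" where
  "unlabeled_instance n W S ps pg \<longleftrightarrow> labeled_instance n W (\<lambda>_. S) ps pg"

datatype loc = AtStart | InBuffer | AtGoal nat

(* region of the workspace occupied by object i in state st;
   SA i = placed start footprint of i, GA i g = footprint of i placed at goal pose g *)
definition occupied ::
  "(nat \<Rightarrow> complex set) \<Rightarrow> (nat \<Rightarrow> nat \<Rightarrow> complex set) \<Rightarrow> (nat \<Rightarrow> loc) \<Rightarrow> nat \<Rightarrow> complex set" where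
  "occupied SA GA st i = (case st i of AtStart \<Rightarrow> SA i | InBuffer \<Rightarrow> {} | AtGoal g \<Rightarrow> GA i g)"

(* one pick-and-place operation; allowed i g: object i may end at goal pose g *)
definition plan_step ::
  "nat \<Rightarrow> (nat \<Rightarrow> complex set) \<Rightarrow> (nat \<Rightarrow> nat \<Rightarrow> complex set) \<Rightarrow> (nat \<Rightarrow> nat \<Rightarrow> bool)
   \<Rightarrow> (nat \<Rightarrow> loc) \<Rightarrow> (nat \<Rightarrow> loc) \<Rightarrow> bool" where
  "plan_step n SA GA allowed st st' \<longleftrightarrow>
     (\<exists>i<n. (\<forall>j. j \<noteq> i \<longrightarrow> st' j = st j) \<and>
       ((st i = AtStart \<and> st' i = InBuffer) \<or>
        (\<exists>g<n. (st i = AtStart \<or> st i = InBuffer) \<and> st' i = AtGoal g \<and> allowed i g \<and>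
           (\<forall>j<n. j \<noteq> i \<longrightarrow> st j \<noteq> AtGoal g) \<and>
           (\<forall>j<n. j \<noteq> i \<longrightarrow> interior (occupied SA GA st j) \<inter> interior (GA i g) = {}))))"

(* a plan, given as the list of successive states *)
definition valid_plan ::
  "nat \<Rightarrow> (nat \<Rightarrow> complex set) \<Rightarrow> (nat \<Rightarrow> nat \<Rightarrow> complex set) \<Rightarrow> (nat \<Rightarrow> nat \<Rightarrow> bool)
   \<Rightarrow> (nat \<Rightarrow> loc) list \<Rightarrow> bool" where
  "valid_plan n SA GA allowed sts \<longleftrightarrow>
     sts \<noteq> [] \<and> hd sts = (\<lambda>_. AtStart) \<and>
     (\<forall>k. Suc k < length sts \<longrightarrow> plan_step n SA GA allowed (sts ! k) (sts ! Suc k)) \<and>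
     (\<forall>i<n. \<exists>g. last sts i = AtGoal g)"

definition running_buffers :: "nat \<Rightarrow> (nat \<Rightarrow> loc) \<Rightarrow> nat" where
  "running_buffers n st = card {i. i < n \<and> st i = InBuffer}"

definition MRB_gen ::
  "nat \<Rightarrow> (nat \<Rightarrow> complex set) \<Rightarrow> (nat \<Rightarrow> nat \<Rightarrow> complex set) \<Rightarrow> (nat \<Rightarrow> nat \<Rightarrow> bool) \<Rightarrow> nat" where
  "MRB_gen n SA GA allowed =
     (LEAST k. \<exists>sts. valid_plan n SA GA allowed sts \<and>
                     (\<forall>st\<in>set sts. running_buffers n st \<le> k))"

definition MRB_labeled :: "nat \<Rightarrow> (nat \<Rightarrow> complex set) \<Rightarrow> (nat \<Rightarrow> pose) \<Rightarrow> (nat \<Rightarrow> pose) \<Rightarrow> nat" where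
  "MRB_labeled n F ps pg =
     MRB_gen n (\<lambda>i. place (ps i) (F i)) (\<lambda>i g. place (pg i) (F i)) (\<lambda>i g. g = i)"

definition MRB_unlabeled :: "nat \<Rightarrow> complex set \<Rightarrow> (nat \<Rightarrow> pose) \<Rightarrow> (nat \<Rightarrow> pose) \<Rightarrow> nat" where
  "MRB_unlabeled n S ps pg =
     MRB_gen n (\<lambda>i. place (ps i) S) (\<lambda>i g. place (pg g) S) (\<lambda>i g. True)"

definition rectangle :: "real \<Rightarrow> real \<Rightarrow> complex set" where
  "rectangle a b = {z. \<bar>Re z\<bar> \<le> a \<and> \<bar>Im z\<bar> \<le> b}"

end

theory Submission
  imports Defs
begin

(* Upper bound: move every object except object 0 into the buffer, then place object 0 and
   after it the buffered objects one by one at their goal poses.  The goal footprints are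
   pairwise interior-disjoint, so every placement is collision-free, and at most n - 1 objects
   are ever buffered.

   Lower bound: start with n horizontal bars of length 6n at heights 0, 3, ..., 3(n - 1) and end
   with n vertical bars at abscissae 0, 3, ..., 3(n - 1).  Every start bar crosses every goal bar,
   so when the first object is placed at a goal pose, each of the other n - 1 objects has left
   its start pose without reaching a goal, i.e. it is in the buffer.  The argument does not
   depend on which object is sent to which goal, so it covers the unlabeled instance and every
   labeling of it. *)

lemma MRB_gen_le:
  assumes "valid_plan n SA GA allowed sts" "\<forall>st\<in>set sts. running_buffers n st \<le> m"
  shows "MRB_gen n SA GA allowed \<le> m"
  unfolding MRB_gen_def using assms by (blast intro: Least_le)

lemma MRB_gen_ge:
  assumes "valid_plan n SA GA allowed sts" "\<forall>st\<in>set sts. running_buffers n st \<le> m"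
    and "\<And>sts. valid_plan n SA GA allowed sts \<Longrightarrow> \<exists>st\<in>set sts. r \<le> running_buffers n st"
  shows "r \<le> MRB_gen n SA GA allowed"
  unfolding MRB_gen_def
proof (rule LeastI2_ex)
  show "\<exists>k sts. valid_plan n SA GA allowed sts \<and> (\<forall>st\<in>set sts. running_buffers n st \<le> k)"
    using assms(1,2) by blast
qed (use assms(3) in fastforce)

lemma plan_step_to_buffer:
  assumes "i < n" "st i = AtStart"
  shows "plan_step n SA GA allowed st (st(i := InBuffer))"
  unfolding plan_step_def using assms by auto

lemma plan_step_to_goal:
  assumes "i < n" "g < n" "st i = AtStart \<or> st i = InBuffer" "allowed i g"
    and "\<And>j. j < n \<Longrightarrow> j \<noteq> i \<Longrightarrow> st j \<noteq> AtGoal g"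
    and "\<And>j. j < n \<Longrightarrow> j \<noteq> i \<Longrightarrow> interior (occupied SA GA st j) \<inter> interior (GA i g) = {}"
  shows "plan_step n SA GA allowed st (st(i := AtGoal g))"
  unfolding plan_step_def using assms by auto

lemma valid_plan_map_upt:
  assumes "0 < N" "f 0 = (\<lambda>_. AtStart)"
    and "\<And>k. Suc k < N \<Longrightarrow> plan_step n SA GA allowed (f k) (f (Suc k))"
    and "\<And>i. i < n \<Longrightarrow> \<exists>g. f (N - 1) i = AtGoal g"
  shows "valid_plan n SA GA allowed (map f [0..<N])"
  unfolding valid_plan_def using assms by (auto simp: hd_map last_map)

definition buffer_then_place :: "nat \<Rightarrow> nat \<Rightarrow> nat \<Rightarrow> loc" where
  "buffer_then_place n k j =
     (if n \<le> j then AtStart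
      else if k < n then (if 0 < j \<and> j \<le> k then InBuffer else AtStart)
      else if j + n \<le> k then AtGoal j else InBuffer)"

lemma running_buffers_buffer_then_place: "running_buffers n (buffer_then_place n k) \<le> n - 1"
proof -
  have "{j. j < n \<and> buffer_then_place n k j = InBuffer} \<subseteq> {1..<n}"
    by (auto simp: buffer_then_place_def split: if_splits)
  then show ?thesis
    unfolding running_buffers_def by (metis card_atLeastLessThan card_mono finite_atLeastLessThan)
qed

lemma plan_step_buffer_then_place:
  assumes k: "Suc k < 2 * n"
    and allowed: "\<And>i. i < n \<Longrightarrow> allowed i i"
    and disjoint: "\<And>i j. i < n \<Longrightarrow> j < n \<Longrightarrow> i \<noteq> j \<Longrightarrow> interior (GA i i) \<inter> interior (GA j j) = {}"
  shows "plan_step n SA GA allowed (buffer_then_place n k) (buffer_then_place n (Suc k))"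
proof -
  have "Suc k < n \<or> Suc k = n \<or> k = n + (k - n) \<and> Suc (k - n) < n"
    using k by linarith
  then consider "Suc k < n" | "Suc k = n" | m where "k = n + m" "Suc m < n"
    by blast
  then show ?thesis
  proof cases
    case 1
    then have "buffer_then_place n (Suc k) = (buffer_then_place n k)(Suc k := InBuffer)"
      by (auto simp: buffer_then_place_def)
    then show ?thesis using 1 by (simp add: plan_step_to_buffer buffer_then_place_def)
  next
    case 2
    then have "buffer_then_place n (Suc k) = (buffer_then_place n k)(0 := AtGoal 0)"
      by (auto simp: buffer_then_place_def)
    then show ?thesis using 2 allowed
      by (auto simp: buffer_then_place_def occupied_def intro!: plan_step_to_goal)
  next
    case 3
    then have "buffer_then_place n (Suc k) = (buffer_then_place n k)(Suc m := AtGoal (Suc m))"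
      by (auto simp: buffer_then_place_def)
    moreover have
      "interior (occupied SA GA (buffer_then_place n k) j) \<inter> interior (GA (Suc m) (Suc m)) = {}"
      if "j < n" "j \<noteq> Suc m" for j
      using disjoint[of j "Suc m"] that 3 by (auto simp: buffer_then_place_def occupied_def)
    ultimately show ?thesis using 3 allowed
      by (auto simp: buffer_then_place_def split: if_splits intro!: plan_step_to_goal)
  qed
qed

lemma valid_plan_buffer_then_place:
  assumes "1 \<le> n"
    and "\<And>i. i < n \<Longrightarrow> allowed i i"
    and "\<And>i j. i < n \<Longrightarrow> j < n \<Longrightarrow> i \<noteq> j \<Longrightarrow> interior (GA i i) \<inter> interior (GA j j) = {}"
  shows "valid_plan n SA GA allowed (map (buffer_then_place n) [0..<2 * n])"
  using assms
  by (intro valid_plan_map_upt plan_step_buffer_then_place) (auto simp: buffer_then_place_def)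

lemma MRB_gen_le_n_minus_1:
  assumes "1 \<le> n"
    and "\<And>i. i < n \<Longrightarrow> allowed i i"
    and "\<And>i j. i < n \<Longrightarrow> j < n \<Longrightarrow> i \<noteq> j \<Longrightarrow> interior (GA i i) \<inter> interior (GA j j) = {}"
  shows "MRB_gen n SA GA allowed \<le> n - 1"
proof (rule MRB_gen_le)
  show "valid_plan n SA GA allowed (map (buffer_then_place n) [0..<2 * n])"
    using assms by (rule valid_plan_buffer_then_place)
qed (use running_buffers_buffer_then_place in auto)

lemma running_buffers_before_first_placement:
  assumes overlap: "\<And>i j g. i < n \<Longrightarrow> j < n \<Longrightarrow> g < n \<Longrightarrow> j \<noteq> i \<Longrightarrow> allowed i g \<Longrightarrow>
              interior (SA j) \<inter> interior (GA i g) \<noteq> {}"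
    and no_goal: "\<And>j g. j < n \<Longrightarrow> st j \<noteq> AtGoal g"
    and step: "plan_step n SA GA allowed st st'"
    and placed: "j0 < n" "st' j0 = AtGoal g0"
  shows "n - 1 \<le> running_buffers n st"
proof -
  from step obtain i where i: "i < n" and others: "\<And>j. j \<noteq> i \<Longrightarrow> st' j = st j"
    and move: "(st i = AtStart \<and> st' i = InBuffer) \<or>
        (\<exists>g<n. (st i = AtStart \<or> st i = InBuffer) \<and> st' i = AtGoal g \<and> allowed i g \<and>
           (\<forall>j<n. j \<noteq> i \<longrightarrow> st j \<noteq> AtGoal g) \<and>
           (\<forall>j<n. j \<noteq> i \<longrightarrow> interior (occupied SA GA st j) \<inter> interior (GA i g) = {}))"
    unfolding plan_step_def by blast
  have "st' i \<noteq> InBuffer"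
    using placed no_goal others by (cases "j0 = i") auto
  with move obtain g where g: "g < n" "allowed i g"
    and free: "\<And>j. j < n \<Longrightarrow> j \<noteq> i \<Longrightarrow> interior (occupied SA GA st j) \<inter> interior (GA i g) = {}"
    by blast
  have "st j = InBuffer" if "j < n" "j \<noteq> i" for j
    using free[OF that] overlap[OF i that(1) g(1) that(2) g(2)] no_goal[OF that(1)]
    by (cases "st j") (auto simp: occupied_def)
  then have "{..<n} - {i} \<subseteq> {j. j < n \<and> st j = InBuffer}"
    by auto
  then have "card ({..<n} - {i}) \<le> running_buffers n st"
    unfolding running_buffers_def by (intro card_mono) auto
  then show ?thesis
    using i by simp
qed

lemma valid_plan_running_buffers_ge:
  assumes "1 \<le> n"
    and overlap: "\<And>i j g. i < n \<Longrightarrow> j < n \<Longrightarrow> g < n \<Longrightarrow> j \<noteq> i \<Longrightarrow> allowed i g \<Longrightarrow>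
              interior (SA j) \<inter> interior (GA i g) \<noteq> {}"
    and plan: "valid_plan n SA GA allowed sts"
  shows "\<exists>st\<in>set sts. n - 1 \<le> running_buffers n st"
proof -
  define placed where "placed k \<longleftrightarrow> k < length sts \<and> (\<exists>j<n. \<exists>g. (sts ! k) j = AtGoal g)" for k
  have "\<not> placed 0"
    using plan by (auto simp: placed_def valid_plan_def hd_conv_nth)
  moreover have "placed (length sts - 1)"
  proof -
    obtain g where "sts \<noteq> []" "last sts 0 = AtGoal g"
      using plan \<open>1 \<le> n\<close> by (auto simp: valid_plan_def)
    then have "length sts - 1 < length sts" "(sts ! (length sts - 1)) 0 = AtGoal g"
      by (simp_all add: last_conv_nth)
    moreover have "0 < n"
      using \<open>1 \<le> n\<close> by simp
    ultimately show ?thesis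
      unfolding placed_def by blast
  qed
  ultimately obtain k where "\<not> placed k" "placed (Suc k)"
    using exists_least_lemma by blast
  then have k: "Suc k < length sts"
    and no_goal: "\<And>j g. j < n \<Longrightarrow> (sts ! k) j \<noteq> AtGoal g"
    and "\<exists>j<n. \<exists>g. (sts ! Suc k) j = AtGoal g"
    unfolding placed_def by auto
  then obtain j0 g0 where "j0 < n" "(sts ! Suc k) j0 = AtGoal g0"
    by blast
  moreover have "plan_step n SA GA allowed (sts ! k) (sts ! Suc k)"
    using plan k by (simp add: valid_plan_def)
  ultimately have "n - 1 \<le> running_buffers n (sts ! k)"
    by (intro running_buffers_before_first_placement[OF overlap no_goal])
  then show ?thesis
    using k by (auto intro: bexI[of _ "sts ! k"])
qed

lemma MRB_gen_eq_n_minus_1: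
  assumes "1 \<le> n"
    and "\<And>i. i < n \<Longrightarrow> allowed i i"
    and "\<And>i j. i < n \<Longrightarrow> j < n \<Longrightarrow> i \<noteq> j \<Longrightarrow> interior (GA i i) \<inter> interior (GA j j) = {}"
    and "\<And>i j g. i < n \<Longrightarrow> j < n \<Longrightarrow> g < n \<Longrightarrow> j \<noteq> i \<Longrightarrow> allowed i g \<Longrightarrow>
              interior (SA j) \<inter> interior (GA i g) \<noteq> {}"
  shows "MRB_gen n SA GA allowed = n - 1"
proof (rule antisym)
  show "MRB_gen n SA GA allowed \<le> n - 1"
    using assms(1-3) by (rule MRB_gen_le_n_minus_1)
  show "n - 1 \<le> MRB_gen n SA GA allowed"
  proof (rule MRB_gen_ge[where m = "n - 1"])
    show "valid_plan n SA GA allowed (map (buffer_then_place n) [0..<2 * n])"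
      using assms(1-3) by (rule valid_plan_buffer_then_place)
    show "\<exists>st\<in>set sts. n - 1 \<le> running_buffers n st" if "valid_plan n SA GA allowed sts" for sts
      using assms(1,4) that by (rule valid_plan_running_buffers_ge)
  qed (use running_buffers_buffer_then_place in auto)
qed

lemma rectangle_eq_cbox: "rectangle a b = cbox (- Complex a b) (Complex a b)"
  unfolding rectangle_def by (auto simp: in_cbox_complex_iff abs_le_iff)

lemma compact_rectangle: "compact (rectangle a b)"
  by (simp add: rectangle_eq_cbox)

lemma convex_rectangle: "convex (rectangle a b)"
  by (simp add: rectangle_eq_cbox)

lemma rectangle_nonempty: "0 \<le> a \<Longrightarrow> 0 \<le> b \<Longrightarrow> rectangle a b \<noteq> {}"
  by (auto simp: rectangle_def intro!: exI[of _ 0])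

lemma mem_place_iff: "z \<in> place (\<theta>, t) S \<longleftrightarrow> cis (- \<theta>) * (z - t) \<in> S"
proof
  assume "z \<in> place (\<theta>, t) S"
  then show "cis (- \<theta>) * (z - t) \<in> S"
    by (auto simp: place_def rigid_def cis_mult mult.assoc[symmetric])
next
  assume "cis (- \<theta>) * (z - t) \<in> S"
  moreover have "z = rigid (\<theta>, t) (cis (- \<theta>) * (z - t))"
    by (simp add: rigid_def cis_mult mult.assoc[symmetric])
  ultimately show "z \<in> place (\<theta>, t) S"
    unfolding place_def by blast
qed

lemma place_rectangle_upright:
  "place (0, c) (rectangle a b) = cbox (c - Complex a b) (c + Complex a b)"
  by (auto simp: mem_place_iff rectangle_def in_cbox_complex_iff abs_le_iff)

lemma place_rectangle_quarter_turn:
  "place (pi / 2, c) (rectangle a b) = cbox (c - Complex b a) (c + Complex b a)"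
  by (auto simp: mem_place_iff rectangle_def in_cbox_complex_iff abs_le_iff)

definition horizontal_pose :: "nat \<Rightarrow> pose" where
  "horizontal_pose k = (0, Complex 0 (3 * real k))"

definition vertical_pose :: "nat \<Rightarrow> pose" where
  "vertical_pose m = (pi / 2, Complex (3 * real m) 0)"

lemma place_horizontal_pose:
  "place (horizontal_pose k) (rectangle a 1) =
     cbox (Complex (- a) (3 * real k - 1)) (Complex a (3 * real k + 1))"
  by (simp add: horizontal_pose_def place_rectangle_upright complex_add complex_diff)

lemma place_vertical_pose:
  "place (vertical_pose m) (rectangle a 1) =
     cbox (Complex (3 * real m - 1) (- a)) (Complex (3 * real m + 1) a)"
  by (simp add: vertical_pose_def place_rectangle_quarter_turn complex_add complex_diff)

lemma one_le_abs_diff_of_nat: "k \<noteq> l \<Longrightarrow> 1 \<le> \<bar>real k - real l\<bar>"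
  by (cases "k < l") auto

lemma horizontal_bars_interior_disjoint:
  assumes "k \<noteq> l"
  shows "interior (place (horizontal_pose k) (rectangle a 1)) \<inter>
    interior (place (horizontal_pose l) (rectangle a 1)) = {}"
  using one_le_abs_diff_of_nat[OF assms]
  by (auto simp: place_horizontal_pose in_box_complex_iff abs_le_iff)

lemma vertical_bars_interior_disjoint:
  assumes "k \<noteq> l"
  shows "interior (place (vertical_pose k) (rectangle a 1)) \<inter>
    interior (place (vertical_pose l) (rectangle a 1)) = {}"
  using one_le_abs_diff_of_nat[OF assms]
  by (auto simp: place_vertical_pose in_box_complex_iff abs_le_iff)

lemma horizontal_vertical_bars_cross:
  assumes "k < n" "m < n"
  shows "Complex (3 * real m) (3 * real k) \<in>
    interior (place (horizontal_pose k) (rectangle (3 * real n) 1)) \<inter>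
    interior (place (vertical_pose m) (rectangle (3 * real n) 1))"
  using assms by (simp add: place_horizontal_pose place_vertical_pose in_box_complex_iff)

lemma unlabeled_instance_crossing_bars:
  "unlabeled_instance n
     (cbox (Complex (- 3 * real n) (- 3 * real n)) (Complex (3 * real n) (3 * real n)))
     (rectangle (3 * real n) 1) horizontal_pose vertical_pose"
proof -
  have "real k + 1 \<le> real n" if "k < n" for k
    using that by simp
  then show ?thesis
    using horizontal_bars_interior_disjoint vertical_bars_interior_disjoint
    by (auto simp: unlabeled_instance_def labeled_instance_def feasible_arr_def compact_rectangle
        rectangle_nonempty place_horizontal_pose place_vertical_pose in_cbox_complex_iff)
qed

lemma MRB_unlabeled_crossing_bars:
  assumes "1 \<le> n"
  shows "MRB_unlabeled n (rectangle (3 * real n) 1) horizontal_pose vertical_pose = n - 1"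
  unfolding MRB_unlabeled_def
  using assms vertical_bars_interior_disjoint horizontal_vertical_bars_cross
  by (intro MRB_gen_eq_n_minus_1) blast+

lemma MRB_labeled_crossing_bars:
  assumes "1 \<le> n" "\<sigma> permutes {..<n}"
  shows "MRB_labeled n (\<lambda>_. rectangle (3 * real n) 1) horizontal_pose (vertical_pose \<circ> \<sigma>) = n - 1"
  unfolding MRB_labeled_def
proof (rule MRB_gen_eq_n_minus_1)
  fix i j g :: nat
  assume "i < n" "j < n" "g < n" "j \<noteq> i" "g = i"
  then have "\<sigma> i < n"
    using permutes_in_image[OF assms(2)] by simp
  with \<open>j < n\<close> show "interior (place (horizontal_pose j) (rectangle (3 * real n) 1)) \<inter>
      interior (place ((vertical_pose \<circ> \<sigma>) i) (rectangle (3 * real n) 1)) \<noteq> {}"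
    using horizontal_vertical_bars_cross by fastforce
next
  fix i j :: nat
  assume "i \<noteq> j"
  then have "\<sigma> i \<noteq> \<sigma> j"
    using permutes_inj[OF assms(2)] by (meson injD)
  then show "interior (place ((vertical_pose \<circ> \<sigma>) i) (rectangle (3 * real n) 1)) \<inter>
      interior (place ((vertical_pose \<circ> \<sigma>) j) (rectangle (3 * real n) 1)) = {}"
    by (simp add: vertical_bars_interior_disjoint)
qed (use assms(1) in simp_all)

lemma MRB_labeled_le_n_minus_1:
  assumes "1 \<le> n" "labeled_instance n W F ps pg"
  shows "MRB_labeled n F ps pg \<le> n - 1"
  unfolding MRB_labeled_def
  using assms by (intro MRB_gen_le_n_minus_1) (auto simp: labeled_instance_def feasible_arr_def)

lemma MRB_unlabeled_le_n_minus_1: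
  assumes "1 \<le> n" "unlabeled_instance n W S ps pg"
  shows "MRB_unlabeled n S ps pg \<le> n - 1"
  unfolding MRB_unlabeled_def
  using assms
  by (intro MRB_gen_le_n_minus_1) (auto simp: unlabeled_instance_def labeled_instance_def feasible_arr_def)

theorem proposition4:
  shows "(\<forall>n\<ge>1. \<forall>W F ps pg. labeled_instance n W F ps pg \<longrightarrow> MRB_labeled n F ps pg \<le> n - 1) \<and>
         (\<forall>n\<ge>1. \<forall>W S ps pg. unlabeled_instance n W S ps pg \<longrightarrow> MRB_unlabeled n S ps pg \<le> n - 1) \<and>
         (\<forall>n\<ge>1. \<exists>W S ps pg a b. 0 < a \<and> 0 < b \<and> S = rectangle a b \<and> convex S \<and>
              unlabeled_instance n W S ps pg \<and>
              MRB_unlabeled n S ps pg = n - 1 \<and>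
              (\<forall>\<sigma>. \<sigma> permutes {..<n} \<longrightarrow> MRB_labeled n (\<lambda>_. S) ps (pg \<circ> \<sigma>) = n - 1))"
proof (intro conjI allI impI)
  fix n :: nat and W F ps pg
  assume "n \<ge> 1" "labeled_instance n W F ps pg"
  then show "MRB_labeled n F ps pg \<le> n - 1"
    by (rule MRB_labeled_le_n_minus_1)
next
  fix n :: nat and W S ps pg
  assume "n \<ge> 1" "unlabeled_instance n W S ps pg"
  then show "MRB_unlabeled n S ps pg \<le> n - 1"
    by (rule MRB_unlabeled_le_n_minus_1)
next
  fix n :: nat
  let ?W = "cbox (Complex (- 3 * real n) (- 3 * real n)) (Complex (3 * real n) (3 * real n))"
  and ?S = "rectangle (3 * real n) 1"
  assume "n \<ge> 1"
  then show "\<exists>W S ps pg a b. 0 < a \<and> 0 < b \<and> S = rectangle a b \<and> convex S \<and>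
      unlabeled_instance n W S ps pg \<and> MRB_unlabeled n S ps pg = n - 1 \<and>
      (\<forall>\<sigma>. \<sigma> permutes {..<n} \<longrightarrow> MRB_labeled n (\<lambda>_. S) ps (pg \<circ> \<sigma>) = n - 1)"
    using unlabeled_instance_crossing_bars convex_rectangle
      MRB_unlabeled_crossing_bars MRB_labeled_crossing_bars
    by (intro exI[of _ ?W] exI[of _ ?S] exI[of _ horizontal_pose] exI[of _ vertical_pose]
        exI[of _ "3 * real n"] exI[of _ 1]) simp
qed

end
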